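(* Let $0<p\le1/2$ and consider $\{0,1\}^n$ with the measure $\mu_p$. For every $f:\{0,1\}^n\to\mathbb{R}$ and every $0\le\delta\le\sqrt{\frac{p\lfloor\log(1/p)\rfloor}{1-p}}$, \[ \|T_\delta f\|_2\le\|f\|_{1+\frac{1-p}{p\lfloor\log(1/p)\rfloor}\delta^2}. \]
   Context: $\mu_p$ is the product measure on $\{0,1\}^n$ with $\mu_p(x)=p^{\sum_i x_i}(1-p)^{n-\sum_i x_i}$, and $\|f\|_q=(\mathbb{E}_{\mu_p}|f|^q)^{1/q}$. Elements of $\{0,1\}^n$ are identified with subsets of $\{1,\dots,n\}$; for $S,T\subseteq\{1,\dots,n\}$, $u_S(T)=\big(-\sqrt{(1-p)/p}\big)^{|S\cap T|}\big(\sqrt{p/(1-p)}\big)^{|S\setminus T|}$. These form an orthonormal basis of $L^2(\mu_p)$ and $f=\sum_S\hat f(S)u_S$ with $\hat f(S)=\mathbb{E}_{\mu_p}[fu_S]$. The noise operator is $T_\delta f=\sum_S\delta^{|S|}\hat f(S)u_S$. $\log$ is base 2. *)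

theory Defs
  imports Complex_Main
begin

text \<open>The cube {0,1}^n is identified with the subsets of {0..<n} (coordinates indexed 0..n-1).\<close>

definition cube :: "nat \<Rightarrow> nat set set" where
  "cube n = Pow {..<n}"

definition mu :: "real \<Rightarrow> nat \<Rightarrow> nat set \<Rightarrow> real" where
  "mu p n T = p ^ card T * (1 - p) ^ (n - card T)"

definition expect :: "real \<Rightarrow> nat \<Rightarrow> (nat set \<Rightarrow> real) \<Rightarrow> real" where
  "expect p n f = (\<Sum>T\<in>cube n. mu p n T * f T)"

definition qnorm :: "real \<Rightarrow> nat \<Rightarrow> real \<Rightarrow> (nat set \<Rightarrow> real) \<Rightarrow> real" where
  "qnorm p n q f = (expect p n (\<lambda>T. \<bar>f T\<bar> powr q)) powr (1 / q)"

definition ubasis :: "real \<Rightarrow> nat set \<Rightarrow> nat set \<Rightarrow> real" where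
  "ubasis p S T = (- sqrt ((1 - p) / p)) ^ card (S \<inter> T) * (sqrt (p / (1 - p))) ^ card (S - T)"

definition fourier :: "real \<Rightarrow> nat \<Rightarrow> (nat set \<Rightarrow> real) \<Rightarrow> nat set \<Rightarrow> real" where
  "fourier p n f S = expect p n (\<lambda>T. f T * ubasis p S T)"

definition noise :: "real \<Rightarrow> nat \<Rightarrow> real \<Rightarrow> (nat set \<Rightarrow> real) \<Rightarrow> nat set \<Rightarrow> real" where
  "noise p n \<delta> f T = (\<Sum>S\<in>cube n. \<delta> ^ card S * fourier p n f S * ubasis p S T)"

end

theory Submission
  imports Defs "HOL-Analysis.Analysis"
begin

text \<open>
  The one-bit \<open>p\<close>-biased noise operator is reduced to the uniform case: a bit of bias
  \<open>p = r / 2^k\<close> is the conjunction of \<open>k\<close> fair bits and one \<open>r\<close>-biased bit.  Applying Bonami's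
  two-point inequality with rate \<open>sqrt (q - 1)\<close> to each fair bit and averaging the last one,
  hypercontractivity tensorizes (by Minkowski's inequality in \<open>L^(2/q)\<close>) to the \<open>k + 1\<close> bits; read
  through the conjunction this controls the biased operator of rate \<open>\<delta>\<close> as soon as
  \<open>\<delta>^2 p (1 - p) \<le> p^2 k (q - 1) \<le> p^2 (q^k - 1)\<close>, i.e. \<open>q = 1 + (1 - p) \<delta>^2 / (p k)\<close>.
  Choosing \<open>k = \<lfloor>log 2 (1/p)\<rfloor>\<close> and tensorizing once more over the \<open>n\<close> coordinates gives the theorem.
\<close>

lemma abs_powr_two: "\<bar>x\<bar> powr 2 = (x::real)^2"
  by (cases "x = 0") (auto simp: powr_numeral)

lemma convex_comb_powr_le:
  fixes a b t s :: real
  assumes "0 \<le> a" "0 \<le> b" "0 \<le> t" "t \<le> 1" "1 \<le> s"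
  shows "((1 - t) * a + t * b) powr s \<le> (1 - t) * a powr s + t * b powr s"
proof (cases "a > 0 \<and> b > 0")
  case True
  then show ?thesis
    using convex_onD[OF powr_convex[OF assms(5)], of t a b] assms by simp
next
  case False
  have powr_le: "c powr s \<le> c" if "0 \<le> c" "c \<le> 1" for c :: real
    using that assms(5) by (metis powr_mono' powr_one_gt_zero_iff powr_one leI le_less not_one_le_zero)
  consider "a = 0" | "b = 0" using False assms by linarith
  then show ?thesis
  proof cases
    case 1
    have "(t * b) powr s = t powr s * b powr s" using assms by (simp add: powr_mult)
    also have "\<dots> \<le> t * b powr s" using powr_le[of t] assms by (intro mult_right_mono) auto
    finally show ?thesis using 1 assms by simp
  next
    case 2
    have "((1 - t) * a) powr s = (1 - t) powr s * a powr s" using assms by (simp add: powr_mult)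
    also have "\<dots> \<le> (1 - t) * a powr s" using powr_le[of "1 - t"] assms by (intro mult_right_mono) auto
    finally show ?thesis using 2 assms by simp
  qed
qed

lemma sum_powr_add_eq_of_null:
  fixes \<mu> U V :: "'a \<Rightarrow> real"
  assumes "finite A" and nonneg: "\<And>x. x \<in> A \<Longrightarrow> 0 \<le> \<mu> x \<and> 0 \<le> U x"
    and null: "(\<Sum>x\<in>A. \<mu> x * U x powr s) \<le> 0"
  shows "(\<Sum>x\<in>A. \<mu> x * (U x + V x) powr s) = (\<Sum>x\<in>A. \<mu> x * V x powr s)"
proof -
  have "\<forall>x\<in>A. \<mu> x * U x powr s = 0"
    using null nonneg
    by (subst sum_nonneg_eq_0_iff[OF assms(1), symmetric]) (auto intro!: antisym sum_nonneg)
  then show ?thesis by (intro sum.cong) auto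
qed

lemma add_powr_le_convex_split:
  fixes a b u v s :: real
  assumes "0 < a" "0 < b" "0 \<le> u" "0 \<le> v" "1 \<le> s"
  shows "(u + v) powr s \<le> (a + b) powr s * (a / (a + b) * (u / a) powr s + b / (a + b) * (v / b) powr s)"
proof -
  have weights: "a / (a + b) = 1 - b / (a + b)" using assms by (simp add: field_simps)
  have "a / (a + b) * (u / a) = u / (a + b)" "b / (a + b) * (v / b) = v / (a + b)" using assms by simp_all
  hence "u + v = (a + b) * (a / (a + b) * (u / a) + b / (a + b) * (v / b))"
    using assms by (simp add: add_divide_distrib[symmetric])
  hence "(u + v) powr s = (a + b) powr s * (a / (a + b) * (u / a) + b / (a + b) * (v / b)) powr s"
    using assms by (simp add: powr_mult)
  also have "\<dots> \<le> (a + b) powr s * (a / (a + b) * (u / a) powr s + b / (a + b) * (v / b) powr s)"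
    unfolding weights using assms by (intro mult_left_mono convex_comb_powr_le) auto
  finally show ?thesis .
qed

lemma sum_powr_Minkowski:
  fixes \<mu> U V :: "'a \<Rightarrow> real" and a b s :: real
  assumes fin: "finite A" and nonneg: "\<And>x. x \<in> A \<Longrightarrow> 0 \<le> \<mu> x \<and> 0 \<le> U x \<and> 0 \<le> V x"
    and s: "1 \<le> s" and a: "0 \<le> a" and b: "0 \<le> b"
    and U: "(\<Sum>x\<in>A. \<mu> x * U x powr s) \<le> a powr s"
    and V: "(\<Sum>x\<in>A. \<mu> x * V x powr s) \<le> b powr s"
  shows "(\<Sum>x\<in>A. \<mu> x * (U x + V x) powr s) \<le> (a + b) powr s"
proof (cases "a > 0 \<and> b > 0")
  case False
  then consider "a = 0" | "b = 0" using a b by linarith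
  then show ?thesis
  proof cases
    case 1
    then show ?thesis
      using sum_powr_add_eq_of_null[OF fin, where \<mu>=\<mu> and U=U and V=V and s=s] nonneg U V s by simp
  next
    case 2
    then show ?thesis
      using sum_powr_add_eq_of_null[OF fin, where \<mu>=\<mu> and U=V and V=U and s=s] nonneg U V s
      by (simp add: add.commute)
  qed
next
  case True
  define t where "t = b / (a + b)"
  have "(\<Sum>x\<in>A. \<mu> x * (U x + V x) powr s)
      \<le> (\<Sum>x\<in>A. (a + b) powr s * ((1 - t) / a powr s * (\<mu> x * U x powr s) + t / b powr s * (\<mu> x * V x powr s)))"
  proof (intro sum_mono)
    fix x assume "x \<in> A"
    then have "\<mu> x * (U x + V x) powr s
        \<le> \<mu> x * ((a + b) powr s * (a / (a + b) * (U x / a) powr s + b / (a + b) * (V x / b) powr s))"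
      using True nonneg s by (intro mult_left_mono add_powr_le_convex_split) auto
    also have "a / (a + b) = 1 - t" using True by (simp add: t_def field_simps)
    finally show "\<mu> x * (U x + V x) powr s
        \<le> (a + b) powr s * ((1 - t) / a powr s * (\<mu> x * U x powr s) + t / b powr s * (\<mu> x * V x powr s))"
      using True nonneg \<open>x \<in> A\<close> by (simp add: powr_divide t_def algebra_simps)
  qed
  also have "\<dots> = (a + b) powr s * ((1 - t) / a powr s * (\<Sum>x\<in>A. \<mu> x * U x powr s)
                                   + t / b powr s * (\<Sum>x\<in>A. \<mu> x * V x powr s))"
    by (simp add: sum_distrib_left sum.distrib distrib_left)
  also have "\<dots> \<le> (a + b) powr s * ((1 - t) / a powr s * a powr s + t / b powr s * b powr s)"
    using True U V by (intro mult_left_mono add_mono) (auto simp: t_def intro!: mult_left_mono)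
  also have "\<dots> = (a + b) powr s" using True by simp
  finally show ?thesis .
qed

lemma one_plus_powr_le:
  fixes z r :: real
  assumes "0 \<le> z" "0 \<le> r" "r \<le> 1"
  shows "(1 + z) powr r \<le> 1 + r * z"
  using Youngs_inequality_0[of r "1 - r" "1 + z" 1] assms by (simp add: algebra_simps)

lemma two_le_powr_add_powr:
  fixes x e :: real
  assumes "0 \<le> x" "x < 1" "e \<le> 0"
  shows "2 \<le> (1 + x) powr e + (1 - x) powr e"
proof -
  define u where "u = (1 + x) powr (e / 2)"
  define v where "v = (1 - x) powr (e / 2)"
  have "0 < 1 - x^2" using assms by (simp add: abs_square_less_1)
  hence "(1 - x^2) powr (- (e / 2)) \<le> 1" using assms by (intro powr_le1) auto
  hence "1 \<le> (1 - x^2) powr (e / 2)" using \<open>0 < 1 - x^2\<close> by (simp add: powr_minus field_simps)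
  also have "\<dots> = u * v"
    using assms by (simp add: u_def v_def powr_mult[symmetric] power2_eq_square algebra_simps)
  finally have "2 \<le> 2 * (u * v)" by simp
  also have "\<dots> \<le> u^2 + v^2" using zero_le_power2[of "u - v"] by (simp add: power2_diff algebra_simps)
  also have "u^2 = (1 + x) powr e" using assms by (simp add: u_def power2_eq_square powr_add[symmetric])
  also have "v^2 = (1 - x) powr e" using assms by (simp add: v_def power2_eq_square powr_add[symmetric])
  finally show ?thesis .
qed

lemma powr_one_plus_minus_powr_one_minus_ge:
  fixes r x :: real
  assumes r: "0 \<le> r" "r \<le> 1" and x: "0 \<le> x" "x < 1"
  shows "2 * r * x \<le> (1 + x) powr r - (1 - x) powr r"
proof -
  define g where "g = (\<lambda>t::real. (1 + t) powr r - (1 - t) powr r - 2 * r * t)"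
  have "g 0 \<le> g x"
  proof (rule DERIV_nonneg_imp_increasing_open[of 0 x g])
    fix t assume t: "0 < t" "t < x"
    have "(g has_real_derivative r * ((1 + t) powr (r - 1) + (1 - t) powr (r - 1) - 2)) (at t)"
      unfolding g_def using t x by (auto intro!: derivative_eq_intros simp: algebra_simps)
    moreover have "2 \<le> (1 + t) powr (r - 1) + (1 - t) powr (r - 1)"
      using t x r by (intro two_le_powr_add_powr) auto
    ultimately show "\<exists>y. (g has_real_derivative y) (at t) \<and> 0 \<le> y"
      using r by (metis diff_ge_0_iff_ge mult_nonneg_nonneg)
  next
    show "continuous_on {0..x} g" unfolding g_def using x
      by (intro continuous_intros continuous_on_powr') (auto intro!: continuous_intros)
  qed (use x in auto)
  thus ?thesis by (simp add: g_def)
qed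

lemma powr_mean_ge_quadratic:
  fixes q y :: real
  assumes q: "1 \<le> q" "q \<le> 2" and y: "0 \<le> y" "y \<le> 1"
  shows "1 + q * (q - 1) * y^2 / 2 \<le> ((1 + y) powr q + (1 - y) powr q) / 2"
proof -
  define g where "g = (\<lambda>t::real. ((1 + t) powr q + (1 - t) powr q) / 2 - q * (q - 1) * t^2 / 2)"
  have "g 0 \<le> g y"
  proof (rule DERIV_nonneg_imp_increasing_open[of 0 y g])
    fix t assume t: "0 < t" "t < y"
    have "(g has_real_derivative (q / 2) * ((1 + t) powr (q - 1) - (1 - t) powr (q - 1) - 2 * (q - 1) * t)) (at t)"
      unfolding g_def using t y
      by (auto intro!: derivative_eq_intros simp: power2_eq_square field_simps)
    moreover have "2 * (q - 1) * t \<le> (1 + t) powr (q - 1) - (1 - t) powr (q - 1)"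
      using t y q by (intro powr_one_plus_minus_powr_one_minus_ge) auto
    ultimately show "\<exists>d. (g has_real_derivative d) (at t) \<and> 0 \<le> d"
      using q by (intro exI conjI) auto
  next
    show "continuous_on {0..y} g" unfolding g_def using y q
      by (intro continuous_intros continuous_on_powr') (auto intro!: continuous_intros)
  qed (use y in auto)
  thus ?thesis by (simp add: g_def field_simps)
qed

lemma Bonami_two_point_normalized:
  fixes q y :: real
  assumes q: "1 \<le> q" "q \<le> 2" and y: "0 \<le> y" "y \<le> 1"
  shows "(1 + (q - 1) * y^2) powr (q / 2) \<le> ((1 + y) powr q + (1 - y) powr q) / 2"
proof -
  have "(1 + (q - 1) * y^2) powr (q / 2) \<le> 1 + (q / 2) * ((q - 1) * y^2)"
    using q by (intro one_plus_powr_le) auto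
  also have "\<dots> \<le> ((1 + y) powr q + (1 - y) powr q) / 2"
    using powr_mean_ge_quadratic[OF q y] by simp
  finally show ?thesis .
qed

lemma Bonami_two_point:
  fixes q A B :: real
  assumes q: "1 \<le> q" "q \<le> 2"
  shows "A^2 + (q - 1) * B^2 \<le> ((\<bar>A - B\<bar> powr q + \<bar>A + B\<bar> powr q) / 2) powr (2 / q)"
proof -
  define M where "M = max \<bar>A\<bar> \<bar>B\<bar>"
  define m where "m = min \<bar>A\<bar> \<bar>B\<bar>"
  have mM: "0 \<le> m" "m \<le> M" by (auto simp: M_def m_def)
  have "M + m = \<bar>A\<bar> + \<bar>B\<bar>" by (simp add: M_def m_def)
  moreover have "(\<bar>A - B\<bar> = M + m \<and> \<bar>A + B\<bar> = M - m) \<or> (\<bar>A + B\<bar> = M + m \<and> \<bar>A - B\<bar> = M - m)"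
    by (auto simp: M_def m_def abs_if)
  ultimately have sym: "\<bar>A - B\<bar> powr q + \<bar>A + B\<bar> powr q = (M - m) powr q + (M + m) powr q"
    by auto
  \<comment> \<open>Since \<open>q - 1 \<le> 1\<close>, putting the larger modulus in the first slot only increases the left side.\<close>
  have swap: "A^2 + (q - 1) * B^2 \<le> M^2 + (q - 1) * m^2"
  proof (cases "\<bar>B\<bar> \<le> \<bar>A\<bar>")
    case False
    hence "A^2 \<le> B^2" by (simp add: abs_le_square_iff)
    hence "0 \<le> (2 - q) * (B^2 - A^2)" using q by (intro mult_nonneg_nonneg) auto
    then show ?thesis using False by (simp add: M_def m_def algebra_simps)
  qed (simp add: M_def m_def)
  show ?thesis
  proof (cases "M = 0")
    case True
    then show ?thesis by (simp add: M_def max_def split: if_splits)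
  next
    case False
    hence Mp: "M > 0" using mM by auto
    define y where "y = m / M"
    have y: "0 \<le> y" "y \<le> 1" using mM Mp by (auto simp: y_def)
    have M_pm: "M - m = M * (1 - y)" "M + m = M * (1 + y)" using Mp by (auto simp: y_def field_simps)
    have "M^2 + (q - 1) * m^2 = M powr 2 * (1 + (q - 1) * y^2)"
      using Mp by (simp add: y_def power2_eq_square field_simps)
    also have "\<dots> = (M powr q * (1 + (q - 1) * y^2) powr (q / 2)) powr (2 / q)"
      using Mp q by (simp add: powr_mult powr_powr)
    also have "\<dots> \<le> (M powr q * (((1 + y) powr q + (1 - y) powr q) / 2)) powr (2 / q)"
      using q y Mp by (intro powr_mono2 mult_left_mono Bonami_two_point_normalized) auto
    also have "M powr q * (((1 + y) powr q + (1 - y) powr q) / 2) = ((M - m) powr q + (M + m) powr q) / 2"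
    proof -
      have "(M * (1 - y)) powr q = M powr q * (1 - y) powr q" "(M * (1 + y)) powr q = M powr q * (1 + y) powr q"
        using Mp y by (simp_all add: powr_mult)
      then show ?thesis unfolding M_pm by (simp add: algebra_simps)
    qed
    finally show ?thesis using swap sym by simp
  qed
qed

section \<open>Product measures and kernel operators on the cube\<close>

definition prod_weight :: "(nat \<Rightarrow> real) \<Rightarrow> nat \<Rightarrow> nat set \<Rightarrow> real" where
  "prod_weight w n T = (\<Prod>i<n. if i \<in> T then w i else 1 - w i)"

definition prod_kernel :: "(nat \<Rightarrow> bool \<Rightarrow> bool \<Rightarrow> real) \<Rightarrow> nat \<Rightarrow> nat set \<Rightarrow> nat set \<Rightarrow> real" where
  "prod_kernel c n U T = (\<Prod>i<n. c i (i \<in> U) (i \<in> T))"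

definition kernel_op ::
    "(nat \<Rightarrow> real) \<Rightarrow> (nat \<Rightarrow> bool \<Rightarrow> bool \<Rightarrow> real) \<Rightarrow> nat \<Rightarrow> (nat set \<Rightarrow> real) \<Rightarrow> nat set \<Rightarrow> real" where
  "kernel_op w c n f T = (\<Sum>U\<in>Pow {..<n}. prod_weight w n U * prod_kernel c n U T * f U)"

text \<open>The one-bit operator with kernel \<open>c\<close> (input bit first) is \<open>(q, 2)\<close>-hypercontractive for the
  measure giving weight \<open>w\<close> to \<open>True\<close>: \<open>x0, x1\<close> are the values of a function at \<open>False, True\<close>.\<close>
definition two_point_hc :: "real \<Rightarrow> (bool \<Rightarrow> bool \<Rightarrow> real) \<Rightarrow> real \<Rightarrow> bool" where
  "two_point_hc w c q \<longleftrightarrow> (\<forall>x0 x1.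
     (1 - w) * ((1 - w) * c False False * x0 + w * c True False * x1)^2
       + w * ((1 - w) * c False True * x0 + w * c True True * x1)^2
     \<le> ((1 - w) * \<bar>x0\<bar> powr q + w * \<bar>x1\<bar> powr q) powr (2 / q))"

lemma prod_weight_nonneg: "(\<And>i. i < n \<Longrightarrow> 0 \<le> w i \<and> w i \<le> 1) \<Longrightarrow> 0 \<le> prod_weight w n T"
  unfolding prod_weight_def by (intro prod_nonneg) auto

lemma prod_weight_insert: "prod_weight w n (insert n T) = prod_weight w n T"
  by (auto simp: prod_weight_def intro!: prod.cong)

lemma prod_kernel_insert_left: "prod_kernel c n (insert n U) T = prod_kernel c n U T"
  and prod_kernel_insert_right: "prod_kernel c n U (insert n T) = prod_kernel c n U T"
  by (auto simp: prod_kernel_def intro!: prod.cong)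

lemma sum_Pow_lessThan_Suc:
  "(\<Sum>T\<in>Pow {..<Suc n}. g T) = (\<Sum>T\<in>Pow {..<n}. g T + g (insert n T))"
proof -
  have "Pow {..<Suc n} = Pow {..<n} \<union> insert n ` Pow {..<n}"
    by (simp add: lessThan_Suc Pow_insert)
  moreover have "Pow {..<n} \<inter> insert n ` Pow {..<n} = {}" by auto
  moreover have "inj_on (insert n) (Pow {..<n})"
    by (rule inj_onI) (metis PowD insert_Diff_if lessThan_iff less_irrefl subset_eq Diff_insert_absorb)
  ultimately show ?thesis
    by (simp add: sum.union_disjoint sum.reindex sum.distrib)
qed

lemma sum_prod_weight_Suc:
  "(\<Sum>T\<in>Pow {..<Suc n}. prod_weight w (Suc n) T * g T)
     = (\<Sum>T\<in>Pow {..<n}. prod_weight w n T * ((1 - w n) * g T + w n * g (insert n T)))"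
  unfolding sum_Pow_lessThan_Suc
  by (intro sum.cong refl) (auto simp: prod_weight_def prod_weight_insert[unfolded prod_weight_def] algebra_simps)

lemma sum_prod_weight_mult_prod:
  fixes h :: "nat \<Rightarrow> bool \<Rightarrow> real"
  shows "(\<Sum>T\<in>Pow {..<n}. prod_weight w n T * (\<Prod>i<n. h i (i \<in> T)))
           = (\<Prod>i<n. (1 - w i) * h i False + w i * h i True)"
proof -
  have "(\<Prod>i<n. (if i \<in> T then w i else 1 - w i) * h i (i \<in> T))
          = (\<Prod>i\<in>T. w i * h i True) * (\<Prod>i\<in>{..<n} - T. (1 - w i) * h i False)"
    if "T \<subseteq> {..<n}" for T
  proof -
    have "(\<Prod>i<n. (if i \<in> T then w i else 1 - w i) * h i (i \<in> T))
            = (\<Prod>i<n. if i \<in> T then w i * h i True else (1 - w i) * h i False)"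
      by (intro prod.cong) auto
    also have "\<dots> = (\<Prod>i\<in>T. w i * h i True) * (\<Prod>i\<in>{..<n} - T. (1 - w i) * h i False)"
      using that by (simp add: prod.If_cases Int_absorb1 Diff_eq)
    finally show ?thesis .
  qed
  then have "(\<Sum>T\<in>Pow {..<n}. prod_weight w n T * (\<Prod>i<n. h i (i \<in> T)))
      = (\<Sum>T\<in>Pow {..<n}. (\<Prod>i\<in>T. w i * h i True) * (\<Prod>i\<in>{..<n} - T. (1 - w i) * h i False))"
    unfolding prod_weight_def prod.distrib[symmetric] by (intro sum.cong) auto
  also have "\<dots> = (\<Prod>i<n. (1 - w i) * h i False + w i * h i True)"
    by (simp add: prod_add add.commute)
  finally show ?thesis .
qed

lemma sum_prod_weight: "(\<Sum>T\<in>Pow {..<n}. prod_weight w n T) = 1"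
  using sum_prod_weight_mult_prod[of w n "\<lambda>_ _. 1"] by simp

lemma kernel_op_Suc:
  assumes "T \<subseteq> {..<n}"
  shows "kernel_op w c (Suc n) f (if b then insert n T else T) =
     (1 - w n) * c n False b * kernel_op w c n f T + w n * c n True b * kernel_op w c n (\<lambda>U. f (insert n U)) T"
proof -
  have "n \<notin> T" using assms by auto
  hence "prod_kernel c (Suc n) U (if b then insert n T else T) = prod_kernel c n U T * c n (n \<in> U) b" for U
    by (simp add: prod_kernel_def prod_kernel_insert_right[unfolded prod_kernel_def])
  then show ?thesis
    unfolding kernel_op_def sum_Pow_lessThan_Suc sum_distrib_left sum.distrib[symmetric]
    by (intro sum.cong refl)
      (auto simp: prod_weight_def prod_weight_insert[unfolded prod_weight_def]
        prod_kernel_insert_left algebra_simps)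
qed

lemma sum_scaled_powr_le:
  fixes \<mu> h :: "'a \<Rightarrow> real"
  assumes "0 \<le> \<nu>" "0 \<le> X" "q * s = 2" and "(\<Sum>T\<in>A. \<mu> T * (h T)^2) \<le> X powr s"
  shows "(\<Sum>T\<in>A. \<mu> T * (\<nu> * \<bar>h T\<bar> powr q) powr s) \<le> (\<nu> * X) powr s"
proof -
  have "(\<Sum>T\<in>A. \<mu> T * (\<nu> * \<bar>h T\<bar> powr q) powr s) = \<nu> powr s * (\<Sum>T\<in>A. \<mu> T * (h T)^2)"
    using assms by (simp add: powr_mult powr_powr abs_powr_two sum_distrib_left algebra_simps)
  also have "\<dots> \<le> \<nu> powr s * X powr s" using assms by (intro mult_left_mono) auto
  finally show ?thesis using assms by (simp add: powr_mult)
qed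

theorem kernel_op_hypercontractive:
  assumes q: "1 \<le> q" "q \<le> 2"
    and one_bit: "\<And>i. i < n \<Longrightarrow> 0 \<le> w i \<and> w i \<le> 1 \<and> two_point_hc (w i) (c i) q"
  shows "(\<Sum>T\<in>Pow {..<n}. prod_weight w n T * (kernel_op w c n f T)^2)
           \<le> (\<Sum>T\<in>Pow {..<n}. prod_weight w n T * \<bar>f T\<bar> powr q) powr (2 / q)"
  using one_bit
proof (induction n arbitrary: f)
  case 0
  show ?case
    using q by (simp add: kernel_op_def prod_weight_def prod_kernel_def powr_powr abs_powr_two)
next
  case (Suc n)
  define W where "W = w n"
  define f1 where "f1 = (\<lambda>U. f (insert n U))"
  define h0 where "h0 = kernel_op w c n f"
  define h1 where "h1 = kernel_op w c n f1"
  define s where "s = 2 / q"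
  define \<mu> where "\<mu> = prod_weight w n"
  have s: "1 \<le> s" "q * s = 2" using q by (auto simp: s_def)
  have W: "0 \<le> W" "W \<le> 1" "two_point_hc W (c n) q" using Suc.prems[of n] by (auto simp: W_def)
  have \<mu>: "0 \<le> \<mu> T" for T unfolding \<mu>_def by (rule prod_weight_nonneg) (use Suc.prems in auto)
  have IH: "(\<Sum>T\<in>Pow {..<n}. \<mu> T * (h0 T)^2) \<le> (\<Sum>T\<in>Pow {..<n}. \<mu> T * \<bar>f T\<bar> powr q) powr s"
           "(\<Sum>T\<in>Pow {..<n}. \<mu> T * (h1 T)^2) \<le> (\<Sum>T\<in>Pow {..<n}. \<mu> T * \<bar>f1 T\<bar> powr q) powr s"
    unfolding h0_def h1_def s_def \<mu>_def using Suc by auto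
  \<comment> \<open>Condition on the last bit, apply the one-bit inequality, then Minkowski in \<open>L^s\<close> with \<open>s = 2/q \<ge> 1\<close>.\<close>
  have "(\<Sum>T\<in>Pow {..<Suc n}. prod_weight w (Suc n) T * (kernel_op w c (Suc n) f T)^2)
     = (\<Sum>T\<in>Pow {..<n}. \<mu> T * ((1 - W) * ((1 - W) * c n False False * h0 T + W * c n True False * h1 T)^2
                                  + W * ((1 - W) * c n False True * h0 T + W * c n True True * h1 T)^2))"
    unfolding sum_prod_weight_Suc
    using kernel_op_Suc[of _ n w c f False] kernel_op_Suc[of _ n w c f True]
    by (intro sum.cong refl) (simp add: \<mu>_def W_def h0_def h1_def f1_def)
  also have "\<dots> \<le> (\<Sum>T\<in>Pow {..<n}. \<mu> T * ((1 - W) * \<bar>h0 T\<bar> powr q + W * \<bar>h1 T\<bar> powr q) powr s)"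
    using W(3) \<mu> unfolding two_point_hc_def s_def by (intro sum_mono mult_left_mono) auto
  also have "\<dots> \<le> ((1 - W) * (\<Sum>T\<in>Pow {..<n}. \<mu> T * \<bar>f T\<bar> powr q)
                     + W * (\<Sum>T\<in>Pow {..<n}. \<mu> T * \<bar>f1 T\<bar> powr q)) powr s"
    using W \<mu> IH s
    by (intro sum_powr_Minkowski sum_scaled_powr_le) (auto intro!: sum_nonneg mult_nonneg_nonneg)
  also have "(1 - W) * (\<Sum>T\<in>Pow {..<n}. \<mu> T * \<bar>f T\<bar> powr q) + W * (\<Sum>T\<in>Pow {..<n}. \<mu> T * \<bar>f1 T\<bar> powr q)
      = (\<Sum>T\<in>Pow {..<Suc n}. prod_weight w (Suc n) T * \<bar>f T\<bar> powr q)"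
    by (simp add: sum_prod_weight_Suc \<mu>_def W_def f1_def sum.distrib sum_distrib_left
        distrib_left mult.left_commute)
  finally show ?case by (simp add: s_def)
qed

section \<open>The biased one-bit inequality\<close>

lemma two_point_hc_uniform_noise:
  assumes q: "1 \<le> q" "q \<le> 2"
  shows "two_point_hc (1/2) (\<lambda>a b. 1 + sqrt (q - 1) * (if a = b then 1 else -1)) q"
proof -
  have "1/2 * (1/2 * (1 + sqrt (q - 1)) * x0 + 1/2 * (1 - sqrt (q - 1)) * x1)^2
          + 1/2 * (1/2 * (1 - sqrt (q - 1)) * x0 + 1/2 * (1 + sqrt (q - 1)) * x1)^2
        \<le> ((\<bar>x0\<bar> powr q + \<bar>x1\<bar> powr q) / 2) powr (2 / q)" for x0 x1 :: real
  proof -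
    define A where "A = (x0 + x1) / 2"
    define B where "B = (x1 - x0) / 2"
    have "sqrt (q - 1) * sqrt (q - 1) = q - 1" using q by simp
    hence "1/2 * (1/2 * (1 + sqrt (q - 1)) * x0 + 1/2 * (1 - sqrt (q - 1)) * x1)^2
             + 1/2 * (1/2 * (1 - sqrt (q - 1)) * x0 + 1/2 * (1 + sqrt (q - 1)) * x1)^2
           = A^2 + (q - 1) * B^2"
      unfolding A_def B_def by (simp add: power2_eq_square field_simps)
    also have "\<dots> \<le> ((\<bar>A - B\<bar> powr q + \<bar>A + B\<bar> powr q) / 2) powr (2 / q)"
      by (rule Bonami_two_point[OF q])
    also have "A - B = x0" by (simp add: A_def B_def field_simps)
    also have "A + B = x1" by (simp add: A_def B_def field_simps)
    finally show ?thesis .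
  qed
  then show ?thesis unfolding two_point_hc_def by (simp add: add_divide_distrib)
qed

lemma two_point_hc_expectation:
  assumes q: "1 \<le> q" and w: "0 \<le> w" "w \<le> 1"
  shows "two_point_hc w (\<lambda>_ _. 1) q"
  unfolding two_point_hc_def
proof (intro allI)
  fix x0 x1 :: real
  define M where "M = (1 - w) * \<bar>x0\<bar> + w * \<bar>x1\<bar>"
  have M0: "0 \<le> M" using w by (simp add: M_def)
  have M: "\<bar>(1 - w) * x0 + w * x1\<bar> \<le> M"
    unfolding M_def using w abs_triangle_ineq[of "(1 - w) * x0" "w * x1"] by (simp add: abs_mult)
  have "(1 - w) * ((1 - w) * 1 * x0 + w * 1 * x1)^2 + w * ((1 - w) * 1 * x0 + w * 1 * x1)^2
          = \<bar>(1 - w) * x0 + w * x1\<bar>^2"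
    by (simp add: left_diff_distrib)
  also have "\<dots> \<le> M^2" using M by (intro power_mono) auto
  also have "\<dots> = (M powr q) powr (2 / q)"
    using q M0 abs_powr_two[of M] by (simp add: powr_powr)
  also have "\<dots> \<le> ((1 - w) * \<bar>x0\<bar> powr q + w * \<bar>x1\<bar> powr q) powr (2 / q)"
    using q w M0 unfolding M_def by (intro powr_mono2 convex_comb_powr_le) auto
  finally show "(1 - w) * ((1 - w) * 1 * x0 + w * 1 * x1)^2 + w * ((1 - w) * 1 * x0 + w * 1 * x1)^2
      \<le> ((1 - w) * \<bar>x0\<bar> powr q + w * \<bar>x1\<bar> powr q) powr (2 / q)" .
qed

text \<open>Coordinates \<open>i < k\<close> are the fair bits and coordinate \<open>k\<close> the \<open>r\<close>-biased one;
  \<open>and_lift\<close> below is the function of their conjunction taking the values \<open>x0, x1\<close>.\<close>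
definition and_weight :: "nat \<Rightarrow> real \<Rightarrow> nat \<Rightarrow> real" where
  "and_weight k r i = (if i < k then 1/2 else r)"

definition and_kernel :: "nat \<Rightarrow> real \<Rightarrow> nat \<Rightarrow> bool \<Rightarrow> bool \<Rightarrow> real" where
  "and_kernel k q i a b = (if i < k then 1 + sqrt (q - 1) * (if a = b then 1 else -1) else 1)"

lemma prod_weight_and_weight_full: "prod_weight (and_weight k r) (Suc k) {..<Suc k} = r / 2^k"
  by (simp add: prod_weight_def and_weight_def power_one_over)

lemma sum_and_kernel_moments:
  assumes "1 \<le> q"
  shows "(\<Sum>U\<in>Pow {..<Suc k}. prod_weight (and_weight k r) (Suc k) U * prod_kernel (and_kernel k q) (Suc k) U T) = 1"
    and "(\<Sum>T\<in>Pow {..<Suc k}. prod_weight (and_weight k r) (Suc k) T * prod_kernel (and_kernel k q) (Suc k) U T) = 1"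
    and "(\<Sum>T\<in>Pow {..<Suc k}. prod_weight (and_weight k r) (Suc k) T * (prod_kernel (and_kernel k q) (Suc k) U T)^2) = q^k"
proof -
  let ?w = "and_weight k r" and ?c = "and_kernel k q"
  show "(\<Sum>U\<in>Pow {..<Suc k}. prod_weight ?w (Suc k) U * prod_kernel ?c (Suc k) U T) = 1"
    unfolding prod_kernel_def sum_prod_weight_mult_prod[of ?w _ "\<lambda>i b. ?c i b (i \<in> T)"]
    by (intro prod.neutral) (auto simp: and_weight_def and_kernel_def field_simps)
  show "(\<Sum>T\<in>Pow {..<Suc k}. prod_weight ?w (Suc k) T * prod_kernel ?c (Suc k) U T) = 1"
    unfolding prod_kernel_def sum_prod_weight_mult_prod[of ?w _ "\<lambda>i b. ?c i (i \<in> U) b"]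
    by (intro prod.neutral) (auto simp: and_weight_def and_kernel_def field_simps)
  have "sqrt (q - 1) * sqrt (q - 1) = q - 1" using assms by simp
  hence factor: "(1 - ?w i) * (?c i (i \<in> U) False)^2 + ?w i * (?c i (i \<in> U) True)^2
                   = (if i < k then q else 1)" for i
    by (cases "i \<in> U") (auto simp: and_weight_def and_kernel_def power2_eq_square field_simps)
  show "(\<Sum>T\<in>Pow {..<Suc k}. prod_weight ?w (Suc k) T * (prod_kernel ?c (Suc k) U T)^2) = q^k"
    unfolding prod_kernel_def prod_power_distrib
      sum_prod_weight_mult_prod[of ?w _ "\<lambda>i b. (?c i (i \<in> U) b)^2"] factor
    by simp
qed

definition and_lift :: "nat \<Rightarrow> real \<Rightarrow> real \<Rightarrow> nat set \<Rightarrow> real" where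
  "and_lift k x0 x1 U = x0 + (if U = {..<Suc k} then x1 - x0 else 0)"

lemma kernel_op_and_lift:
  assumes "1 \<le> q"
  shows "kernel_op (and_weight k r) (and_kernel k q) (Suc k) (and_lift k x0 x1) T
           = x0 + (x1 - x0) * (r / 2^k) * prod_kernel (and_kernel k q) (Suc k) {..<Suc k} T"
proof -
  let ?\<mu> = "prod_weight (and_weight k r) (Suc k)" and ?K = "prod_kernel (and_kernel k q) (Suc k)"
  have "kernel_op (and_weight k r) (and_kernel k q) (Suc k) (and_lift k x0 x1) T
      = (\<Sum>U\<in>Pow {..<Suc k}. x0 * (?\<mu> U * ?K U T) + (if U = {..<Suc k} then (x1 - x0) * (?\<mu> U * ?K U T) else 0))"
    unfolding kernel_op_def by (intro sum.cong refl) (simp add: and_lift_def algebra_simps)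
  also have "\<dots> = x0 + (x1 - x0) * (r / 2^k) * ?K {..<Suc k} T"
    using sum_and_kernel_moments(1)[OF assms, of k r T]
    by (simp add: sum.distrib sum_distrib_left[symmetric] prod_weight_and_weight_full)
  finally show ?thesis .
qed

lemma and_lift_energy:
  fixes q r x0 x1 :: real and k :: nat
  assumes "1 \<le> q"
  defines "p \<equiv> r / 2^k"
  shows "(\<Sum>T\<in>Pow {..<Suc k}. prod_weight (and_weight k r) (Suc k) T
            * (kernel_op (and_weight k r) (and_kernel k q) (Suc k) (and_lift k x0 x1) T)^2)
           = ((1 - p) * x0 + p * x1)^2 + p^2 * (q^k - 1) * (x1 - x0)^2"
proof -
  let ?\<mu> = "prod_weight (and_weight k r) (Suc k)" and ?K = "prod_kernel (and_kernel k q) (Suc k) {..<Suc k}"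
  have op: "kernel_op (and_weight k r) (and_kernel k q) (Suc k) (and_lift k x0 x1) T = x0 + (x1 - x0) * p * ?K T" for T
    using kernel_op_and_lift[OF assms(1)] by (simp add: p_def)
  have "(\<Sum>T\<in>Pow {..<Suc k}. ?\<mu> T * (kernel_op (and_weight k r) (and_kernel k q) (Suc k) (and_lift k x0 x1) T)^2)
      = (\<Sum>T\<in>Pow {..<Suc k}. x0^2 * ?\<mu> T + (2 * x0 * (x1 - x0) * p) * (?\<mu> T * ?K T)
           + ((x1 - x0)^2 * p^2) * (?\<mu> T * (?K T)^2))"
    by (intro sum.cong refl) (simp add: op power2_eq_square algebra_simps)
  also have "\<dots> = x0^2 + 2 * x0 * (x1 - x0) * p + (x1 - x0)^2 * p^2 * q^k"
    using sum_and_kernel_moments(2,3)[OF assms(1), of k r "{..<Suc k}"]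
    by (simp add: sum.distrib sum_distrib_left[symmetric] sum_prod_weight)
  also have "\<dots> = ((1 - p) * x0 + p * x1)^2 + p^2 * (q^k - 1) * (x1 - x0)^2"
    by (simp add: power2_eq_square algebra_simps)
  finally show ?thesis .
qed

lemma and_lift_norm:
  "(\<Sum>T\<in>Pow {..<Suc k}. prod_weight (and_weight k r) (Suc k) T * \<bar>and_lift k x0 x1 T\<bar> powr q)
     = (1 - r / 2^k) * \<bar>x0\<bar> powr q + r / 2^k * \<bar>x1\<bar> powr q"
proof -
  let ?\<mu> = "prod_weight (and_weight k r) (Suc k)"
  have "(\<Sum>T\<in>Pow {..<Suc k}. ?\<mu> T * \<bar>and_lift k x0 x1 T\<bar> powr q)
      = (\<Sum>T\<in>Pow {..<Suc k}. \<bar>x0\<bar> powr q * ?\<mu> T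
          + (if T = {..<Suc k} then ?\<mu> T * (\<bar>x1\<bar> powr q - \<bar>x0\<bar> powr q) else 0))"
    by (intro sum.cong refl) (auto simp: and_lift_def algebra_simps)
  also have "\<dots> = (1 - r / 2^k) * \<bar>x0\<bar> powr q + r / 2^k * \<bar>x1\<bar> powr q"
    by (simp add: sum.distrib sum_distrib_left[symmetric] sum_prod_weight prod_weight_and_weight_full
        algebra_simps)
  finally show ?thesis .
qed

lemma and_embedding_bound:
  fixes q r x0 x1 :: real and k :: nat
  assumes q: "1 \<le> q" "q \<le> 2" and r: "0 \<le> r" "r \<le> 1"
  defines "p \<equiv> r / 2^k"
  shows "((1 - p) * x0 + p * x1)^2 + p^2 * (q^k - 1) * (x1 - x0)^2
           \<le> ((1 - p) * \<bar>x0\<bar> powr q + p * \<bar>x1\<bar> powr q) powr (2 / q)"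
proof -
  have "\<And>i. i < Suc k \<Longrightarrow> 0 \<le> and_weight k r i \<and> and_weight k r i \<le> 1
                         \<and> two_point_hc (and_weight k r i) (and_kernel k q i) q"
    using two_point_hc_uniform_noise[OF q] two_point_hc_expectation[OF q(1) r] r
    by (simp add: and_weight_def and_kernel_def[abs_def])
  then have "(\<Sum>T\<in>Pow {..<Suc k}. prod_weight (and_weight k r) (Suc k) T
                 * (kernel_op (and_weight k r) (and_kernel k q) (Suc k) (and_lift k x0 x1) T)^2)
      \<le> (\<Sum>T\<in>Pow {..<Suc k}. prod_weight (and_weight k r) (Suc k) T * \<bar>and_lift k x0 x1 T\<bar> powr q) powr (2 / q)"
    by (rule kernel_op_hypercontractive[OF q])
  then show ?thesis unfolding and_lift_energy[OF q(1)] and_lift_norm p_def .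
qed

definition biased_char :: "real \<Rightarrow> bool \<Rightarrow> real" where
  "biased_char p b = (if b then - sqrt ((1 - p) / p) else sqrt (p / (1 - p)))"

lemma biased_noise_two_point_energy:
  fixes p d x0 x1 :: real
  assumes "0 < p" "p < 1"
  shows "(1 - p) * ((1 - p) * (1 + d * biased_char p False * biased_char p False) * x0
                     + p * (1 + d * biased_char p True * biased_char p False) * x1)^2
         + p * ((1 - p) * (1 + d * biased_char p False * biased_char p True) * x0
                     + p * (1 + d * biased_char p True * biased_char p True) * x1)^2
       = ((1 - p) * x0 + p * x1)^2 + d^2 * (p * (1 - p)) * (x1 - x0)^2"
proof -
  define a where "a = sqrt (p / (1 - p))"
  define b where "b = sqrt ((1 - p) / p)"
  have ab: "a * b = 1" using assms by (simp add: a_def b_def real_sqrt_mult[symmetric])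
  have a2: "(1 - p) * a^2 = p" and b2: "p * b^2 = 1 - p" using assms by (simp_all add: a_def b_def)
  have s: "(1 - p) * a = p * b"
    using arg_cong[OF a2, of "\<lambda>x. x * b"] ab by (simp add: power2_eq_square mult.assoc)
  define m where "m = (1 - p) * x0 + p * x1"
  define D where "D = (1 - p) * a * x0 - p * b * x1"
  have "(1 - p) * (m + d * a * D)^2 + p * (m - d * b * D)^2
          = m^2 + 2 * m * d * D * ((1 - p) * a - p * b) + d^2 * D^2 * ((1 - p) * a^2 + p * b^2)"
    by (simp add: power2_eq_square algebra_simps)
  also have "\<dots> = m^2 + d^2 * D^2" using s a2 b2 by simp
  also have "D^2 = (1 - p) * ((1 - p) * a^2) * (x1 - x0)^2"
    unfolding D_def s[symmetric] by (simp add: power2_eq_square algebra_simps)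
  finally have "(1 - p) * (m + d * a * D)^2 + p * (m - d * b * D)^2
                  = m^2 + d^2 * (p * (1 - p)) * (x1 - x0)^2" by (simp add: a2)
  moreover have "biased_char p False = a" "biased_char p True = - b"
    by (simp_all add: biased_char_def a_def b_def)
  ultimately show ?thesis
    using ab by (simp add: m_def D_def power2_eq_square algebra_simps)
qed

lemma two_point_hc_biased_noise:
  fixes p d q :: real and k :: nat
  assumes p: "0 < p" "p < 1" and k: "1 \<le> k" "p * 2^k \<le> 1"
    and q: "q = 1 + (1 - p) / (p * k) * d^2" "q \<le> 2"
  shows "two_point_hc p (\<lambda>a b. 1 + d * biased_char p a * biased_char p b) q"
proof -
  note p1 = p(2)
  have q1: "1 \<le> q" using p k(1) by (simp add: q(1))
  have "d^2 * (p * (1 - p)) = p^2 * (real k * (q - 1))"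
    using p k(1) by (simp add: q(1) field_simps power2_eq_square)
  also have "\<dots> \<le> p^2 * (q^k - 1)"
    using Bernoulli_inequality[of "q - 1" k] q1 by (intro mult_left_mono) auto
  finally have noise_rate: "d^2 * (p * (1 - p)) \<le> p^2 * (q^k - 1)" .
  show ?thesis unfolding two_point_hc_def
  proof (intro allI)
    fix x0 x1 :: real
    have "((1 - p) * x0 + p * x1)^2 + d^2 * (p * (1 - p)) * (x1 - x0)^2
            \<le> ((1 - p) * x0 + p * x1)^2 + p^2 * (q^k - 1) * (x1 - x0)^2"
      using noise_rate by (intro add_left_mono mult_right_mono) auto
    also have "\<dots> \<le> ((1 - p) * \<bar>x0\<bar> powr q + p * \<bar>x1\<bar> powr q) powr (2 / q)"
      using and_embedding_bound[OF q1 q(2), of "p * 2^k" k x0 x1] p(1) k(2) by simp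
    finally show "(1 - p) * ((1 - p) * (1 + d * biased_char p False * biased_char p False) * x0
                     + p * (1 + d * biased_char p True * biased_char p False) * x1)^2
         + p * ((1 - p) * (1 + d * biased_char p False * biased_char p True) * x0
                     + p * (1 + d * biased_char p True * biased_char p True) * x1)^2
       \<le> ((1 - p) * \<bar>x0\<bar> powr q + p * \<bar>x1\<bar> powr q) powr (2 / q)"
      unfolding biased_noise_two_point_energy[OF p] .
  qed
qed

section \<open>The noise operator\<close>

lemma ubasis_eq_prod_biased_char:
  assumes "finite S"
  shows "ubasis p S T = (\<Prod>i\<in>S. biased_char p (i \<in> T))"
proof -
  have "(\<Prod>i\<in>S. biased_char p (i \<in> T))
          = (\<Prod>i\<in>S \<inter> {i. i \<in> T}. - sqrt ((1 - p) / p)) * (\<Prod>i\<in>S \<inter> - {i. i \<in> T}. sqrt (p / (1 - p)))"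
    unfolding biased_char_def by (rule prod.If_cases[OF assms])
  then show ?thesis by (simp add: ubasis_def Diff_eq)
qed

lemma mu_eq_prod_weight:
  assumes "T \<subseteq> {..<n}"
  shows "mu p n T = prod_weight (\<lambda>_. p) n T"
proof -
  have "prod_weight (\<lambda>_. p) n T = p ^ card ({..<n} \<inter> T) * (1 - p) ^ card ({..<n} - T)"
    unfolding prod_weight_def by (simp add: prod.If_cases Diff_eq)
  also have "{..<n} \<inter> T = T" using assms by auto
  also have "card ({..<n} - T) = n - card T"
    using assms by (simp add: card_Diff_subset finite_subset)
  finally show ?thesis by (simp add: mu_def)
qed

lemma expect_eq_sum_prod_weight:
  "expect p n g = (\<Sum>T\<in>Pow {..<n}. prod_weight (\<lambda>_. p) n T * g T)"
  unfolding expect_def cube_def by (intro sum.cong refl) (simp add: mu_eq_prod_weight)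

lemma noise_eq_kernel_op:
  "noise p n \<delta> f T = kernel_op (\<lambda>_. p) (\<lambda>_ a b. 1 + \<delta> * biased_char p a * biased_char p b) n f T"
proof -
  have kernel: "(\<Sum>S\<in>cube n. \<delta> ^ card S * ubasis p S U * ubasis p S T)
       = prod_kernel (\<lambda>_ a b. 1 + \<delta> * biased_char p a * biased_char p b) n U T" for U
  proof -
    have "(\<Sum>S\<in>cube n. \<delta> ^ card S * ubasis p S U * ubasis p S T)
        = (\<Sum>S\<in>Pow {..<n}. (\<Prod>i\<in>S. \<delta> * biased_char p (i \<in> U) * biased_char p (i \<in> T)) * (\<Prod>i\<in>{..<n} - S. 1))"
      by (intro sum.cong refl)
        (auto simp: cube_def ubasis_eq_prod_biased_char finite_subset prod.distrib)
    also have "\<dots> = (\<Prod>i<n. \<delta> * biased_char p (i \<in> U) * biased_char p (i \<in> T) + 1)"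
      by (rule prod_add[symmetric]) simp
    finally show ?thesis by (simp add: prod_kernel_def add.commute)
  qed
  have "noise p n \<delta> f T
      = (\<Sum>S\<in>cube n. \<Sum>U\<in>cube n. mu p n U * f U * (\<delta> ^ card S * ubasis p S U * ubasis p S T))"
    unfolding noise_def fourier_def expect_def
    by (simp add: sum_distrib_left sum_distrib_right algebra_simps)
  also have "\<dots> = (\<Sum>U\<in>cube n. mu p n U * f U * (\<Sum>S\<in>cube n. \<delta> ^ card S * ubasis p S U * ubasis p S T))"
    by (subst sum.swap) (simp add: sum_distrib_left)
  also have "\<dots> = kernel_op (\<lambda>_. p) (\<lambda>_ a b. 1 + \<delta> * biased_char p a * biased_char p b) n f T"
    unfolding kernel kernel_op_def by (intro sum.cong) (auto simp: cube_def mu_eq_prod_weight)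
  finally show ?thesis .
qed

theorem noise_hypercontractive:
  fixes p \<delta> :: real and k n :: nat
  assumes p: "0 < p" and k: "1 \<le> k" "p * 2^k \<le> 1"
    and q2: "1 + (1 - p) / (p * k) * \<delta>^2 \<le> 2"
  shows "qnorm p n 2 (noise p n \<delta> f) \<le> qnorm p n (1 + (1 - p) / (p * k) * \<delta>^2) f"
proof -
  define q where "q = 1 + (1 - p) / (p * k) * \<delta>^2"
  define \<mu> where "\<mu> = prod_weight (\<lambda>_. p) n"
  have "p * 2 \<le> p * 2^k" using p k(1) power_increasing[of 1 k "2::real"] by simp
  hence p1: "p < 1" using k(2) p by linarith
  have q: "1 \<le> q" "q \<le> 2" using p p1 q2 by (simp_all add: q_def)
  have \<mu>: "0 \<le> \<mu> T" for T unfolding \<mu>_def using p p1 by (intro prod_weight_nonneg) auto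
  have "(\<Sum>T\<in>Pow {..<n}. \<mu> T * (noise p n \<delta> f T)^2) \<le> (\<Sum>T\<in>Pow {..<n}. \<mu> T * \<bar>f T\<bar> powr q) powr (2 / q)"
    unfolding noise_eq_kernel_op \<mu>_def
    using two_point_hc_biased_noise[OF p p1 k q_def q(2)] p p1
    by (intro kernel_op_hypercontractive q) auto
  hence "qnorm p n 2 (noise p n \<delta> f) \<le> ((\<Sum>T\<in>Pow {..<n}. \<mu> T * \<bar>f T\<bar> powr q) powr (2 / q)) powr (1 / 2)"
    unfolding qnorm_def expect_eq_sum_prod_weight abs_powr_two \<mu>_def[symmetric]
    using \<mu> by (intro powr_mono2) (auto intro: sum_nonneg)
  also have "\<dots> = qnorm p n q f"
    using \<mu> by (simp add: qnorm_def expect_eq_sum_prod_weight \<mu>_def[symmetric] powr_powr sum_nonneg)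
  finally show ?thesis by (simp add: q_def)
qed

lemma floor_log_inverse_bounds:
  fixes p :: real
  assumes "0 < p" "p \<le> 1/2"
  shows "1 \<le> \<lfloor>log 2 (1 / p)\<rfloor>" and "p * 2 ^ nat \<lfloor>log 2 (1 / p)\<rfloor> \<le> 1"
proof -
  have "2 powr 1 \<le> 1 / p" using assms by (simp add: field_simps)
  then show L: "1 \<le> \<lfloor>log 2 (1 / p)\<rfloor>" using assms by (simp add: le_log_iff le_floor_iff)
  define k where "k = nat \<lfloor>log 2 (1 / p)\<rfloor>"
  have "real k \<le> log 2 (1 / p)" using L by (simp add: k_def)
  hence "2 powr real k \<le> 1 / p" using assms by (simp add: le_log_iff)
  hence "p * 2 ^ k \<le> 1" using assms by (simp add: powr_realpow field_simps)
  then show "p * 2 ^ nat \<lfloor>log 2 (1 / p)\<rfloor> \<le> 1" by (simp add: k_def)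
qed

theorem proposition3p3:
  fixes p \<delta> :: real and n :: nat and f :: "nat set \<Rightarrow> real"
  assumes "0 < p" and "p \<le> 1/2"
    and "0 \<le> \<delta>"
    and "\<delta> \<le> sqrt (p * of_int \<lfloor>log 2 (1 / p)\<rfloor> / (1 - p))"
  shows "qnorm p n 2 (noise p n \<delta> f)
           \<le> qnorm p n (1 + (1 - p) / (p * of_int \<lfloor>log 2 (1 / p)\<rfloor>) * \<delta>^2) f"
proof -
  define k where "k = nat \<lfloor>log 2 (1 / p)\<rfloor>"
  have L: "1 \<le> \<lfloor>log 2 (1 / p)\<rfloor>" "p * 2 ^ k \<le> 1"
    using floor_log_inverse_bounds[OF assms(1,2)] by (simp_all add: k_def)
  have k: "real k = of_int \<lfloor>log 2 (1 / p)\<rfloor>" "1 \<le> k" using L(1) by (simp_all add: k_def le_nat_iff)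
  have "\<delta>^2 \<le> p * k / (1 - p)"
    using power_mono[OF assms(4) assms(3), of 2] assms(1,2) k by simp
  hence "1 + (1 - p) / (p * k) * \<delta>^2 \<le> 2"
    using assms(1,2) k(2) by (simp add: field_simps)
  then show ?thesis
    using noise_hypercontractive[OF assms(1) k(2) L(2)] by (simp add: k(1))
qed

end
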